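(* Let $R$ be a commutative ring which either has finitely many maximal ideals or whose set of minimal prime ideals $\operatorname{Min}(R)$ is quasi-compact in the Zariski topology. Then the following are equivalent: (i) $R$ is a GPP-ring; (ii) $R$ is a GPF-ring; (iii) $R$ is a quasi p.f. ring.
   Context: $R$ is a GPP-ring (resp. GPF-ring) if for each $f\in R$ there is $n\geq1$ with $Rf^n$ a projective (resp. flat) $R$-module. An ideal $I$ is quasi-pure if for each $f\in I$ there is $g\in I$ with $f(1-g)$ nilpotent; $R$ is a quasi p.f. ring if $\operatorname{Ann}(f)$ is quasi-pure for all $f\in R$. *)

theory Defs
  imports Main
begin

text \<open>Commutative rings are modelled by the type class comm_ring_1 (the ring is the
whole type). Ideals, prime/maximal/minimal prime ideals are sets of ring elements.\<close>

definition ring_ideal :: "'a::comm_ring_1 set \<Rightarrow> bool" where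
  "ring_ideal I \<longleftrightarrow> 0 \<in> I \<and> (\<forall>x\<in>I. \<forall>y\<in>I. x + y \<in> I) \<and> (\<forall>r. \<forall>x\<in>I. r * x \<in> I)"

definition prime_ideal :: "'a::comm_ring_1 set \<Rightarrow> bool" where
  "prime_ideal P \<longleftrightarrow> ring_ideal P \<and> P \<noteq> UNIV \<and> (\<forall>x y. x * y \<in> P \<longrightarrow> x \<in> P \<or> y \<in> P)"

definition maximal_ideal :: "'a::comm_ring_1 set \<Rightarrow> bool" where
  "maximal_ideal M \<longleftrightarrow> ring_ideal M \<and> M \<noteq> UNIV \<and>
     (\<forall>J. ring_ideal J \<and> M \<subseteq> J \<longrightarrow> J = M \<or> J = UNIV)"

definition minimal_prime :: "'a::comm_ring_1 set \<Rightarrow> bool" where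
  "minimal_prime P \<longleftrightarrow> prime_ideal P \<and> (\<forall>Q. prime_ideal Q \<and> Q \<subseteq> P \<longrightarrow> Q = P)"

text \<open>Min(R) with the subspace topology of the Zariski topology on Spec(R): the open sets of
Spec(R) are exactly the sets D(S) = {P. \<not> S \<subseteq> P}, S \<subseteq> R.\<close>

definition Min_quasi_compact :: "'a::comm_ring_1 itself \<Rightarrow> bool" where
  "Min_quasi_compact _ \<longleftrightarrow>
     (\<forall>\<S> :: 'a set set.
        (\<forall>P. minimal_prime P \<longrightarrow> (\<exists>S\<in>\<S>. \<not> S \<subseteq> P)) \<longrightarrow>
        (\<exists>\<F>\<subseteq>\<S>. finite \<F> \<and> (\<forall>P. minimal_prime P \<longrightarrow> (\<exists>S\<in>\<F>. \<not> S \<subseteq> P))))"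

definition nilpotent_elt :: "'a::comm_ring_1 \<Rightarrow> bool" where
  "nilpotent_elt x \<longleftrightarrow> (\<exists>k::nat. x ^ k = 0)"

definition Ann :: "'a::comm_ring_1 \<Rightarrow> 'a set" where
  "Ann f = {x. x * f = 0}"

definition quasi_pure :: "'a::comm_ring_1 set \<Rightarrow> bool" where
  "quasi_pure I \<longleftrightarrow> (\<forall>f\<in>I. \<exists>g\<in>I. nilpotent_elt (f * (1 - g)))"

definition quasi_pf_ring :: "'a::comm_ring_1 itself \<Rightarrow> bool" where
  "quasi_pf_ring _ \<longleftrightarrow> (\<forall>f::'a. quasi_pure (Ann f))"

definition principal :: "'a::comm_ring_1 \<Rightarrow> 'a set" where
  "principal f = {r * f | r. True}"

text \<open>R-linear maps between R-submodules of R-modules; the free R-module R^(X) on an index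
set X is modelled as the finitely supported functions X \<rightarrow> R.\<close>

definition free_module :: "'a set \<Rightarrow> ('a \<Rightarrow> 'b::comm_ring_1) set" where
  "free_module X = {\<phi>. finite {x. \<phi> x \<noteq> 0} \<and> {x. \<phi> x \<noteq> 0} \<subseteq> X}"

text \<open>A submodule M of R is projective iff it is a direct summand (retract) of a free
R-module. Since M is generated by its own elements, free modules indexed by subsets of
the ring suffice.\<close>

definition projective_submodule :: "'a::comm_ring_1 set \<Rightarrow> bool" where
  "projective_submodule M \<longleftrightarrow>
     (\<exists>(X::'a set) (i::'a \<Rightarrow> ('a \<Rightarrow> 'a)) (p::('a \<Rightarrow> 'a) \<Rightarrow> 'a).
        (\<forall>m\<in>M. i m \<in> free_module X) \<and>
        (\<forall>m\<in>M. \<forall>m'\<in>M. i (m + m') = (\<lambda>x. i m x + i m' x)) \<and>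
        (\<forall>r. \<forall>m\<in>M. i (r * m) = (\<lambda>x. r * i m x)) \<and>
        (\<forall>\<phi>\<in>free_module X. p \<phi> \<in> M) \<and>
        (\<forall>\<phi>\<in>free_module X. \<forall>\<psi>\<in>free_module X. p (\<lambda>x. \<phi> x + \<psi> x) = p \<phi> + p \<psi>) \<and>
        (\<forall>r. \<forall>\<phi>\<in>free_module X. p (\<lambda>x. r * \<phi> x) = r * p \<phi>) \<and>
        (\<forall>m\<in>M. p (i m) = m))"

text \<open>Flatness of a submodule M of R, via the equational criterion of flatness
(no tensor products are available in the library): every relation
\<Sum> r_i m_i = 0 with m_i \<in> M is trivial.\<close>

definition flat_submodule :: "'a::comm_ring_1 set \<Rightarrow> bool" where
  "flat_submodule M \<longleftrightarrow>
     (\<forall>(n::nat) (r::nat \<Rightarrow> 'a) (m::nat \<Rightarrow> 'a).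
        (\<forall>i<n. m i \<in> M) \<and> (\<Sum>i<n. r i * m i) = 0 \<longrightarrow>
        (\<exists>(k::nat) (a::nat \<Rightarrow> nat \<Rightarrow> 'a) (y::nat \<Rightarrow> 'a).
           (\<forall>j<k. y j \<in> M) \<and>
           (\<forall>i<n. m i = (\<Sum>j<k. a i j * y j)) \<and>
           (\<forall>j<k. (\<Sum>i<n. r i * a i j) = 0)))"

definition GPP_ring :: "'a::comm_ring_1 itself \<Rightarrow> bool" where
  "GPP_ring _ \<longleftrightarrow> (\<forall>f::'a. \<exists>n\<ge>1. projective_submodule (principal (f ^ n)))"

definition GPF_ring :: "'a::comm_ring_1 itself \<Rightarrow> bool" where
  "GPF_ring _ \<longleftrightarrow> (\<forall>f::'a. \<exists>n\<ge>1. flat_submodule (principal (f ^ n)))"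

end

theory Submission
  imports Defs
begin

text \<open>In every ring GPP implies GPF implies quasi p.f.: R a is projective iff Ann a = R (1 - e)
  for some e with e a = a, which makes R a flat; and flatness of R x^n, applied to the relation
  g x^n = 0 for g \<in> Ann x, gives w \<in> Ann g with x^n = w x^n, so x (1 - w) is nilpotent.

  Conversely, let R be quasi p.f. and f \<in> R. At a maximal ideal M where f is not nilpotent in R_M,
  quasi-purity of Ann x for x \<in> Ann (f^n) shows that Ann (f^n) vanishes in R_M. At the remaining
  maximal ideals it suffices to find, for large n, a finite T \<subseteq> Ann (f^n) not contained in any of
  them: with finitely many maximal ideals this is immediate, and otherwise it comes from a finite
  subcover of Min(R) by D(f) and the D(s) with s f^k = 0. A local-global argument then makes
  Ann (f^n) a pure ideal with an element u fixing T, and Ann (f^n) = R u.\<close>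

lemma ideal_zero: "ring_ideal I \<Longrightarrow> 0 \<in> I"
  by (simp add: ring_ideal_def)

lemma ideal_add: "ring_ideal I \<Longrightarrow> x \<in> I \<Longrightarrow> y \<in> I \<Longrightarrow> x + y \<in> I"
  by (simp add: ring_ideal_def)

lemma ideal_mult_left: "ring_ideal I \<Longrightarrow> x \<in> I \<Longrightarrow> r * x \<in> I"
  by (simp add: ring_ideal_def)

lemma ideal_mult_right: "ring_ideal I \<Longrightarrow> x \<in> I \<Longrightarrow> x * r \<in> I"
  by (metis ideal_mult_left mult.commute)

lemma ideal_eq_UNIV_if_one: "ring_ideal I \<Longrightarrow> 1 \<in> I \<Longrightarrow> I = UNIV"
  by (metis UNIV_eq_I ideal_mult_left mult.right_neutral)

lemma ring_ideal_Ann: "ring_ideal (Ann b)"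
  by (auto simp: ring_ideal_def Ann_def algebra_simps)

lemma principal_memI: "r * a \<in> principal a"
  by (auto simp: principal_def)

lemma self_mem_principal: "a \<in> principal a"
  using principal_memI[of 1 a] by simp

lemma ring_ideal_principal: "ring_ideal (principal a)"
  unfolding ring_ideal_def principal_def
  by (auto simp: distrib_right mult.assoc intro: exI[of _ 0] exI[of _ "_ + _"] exI[of _ "_ * _"])

lemma ring_ideal_sum:
  assumes I: "ring_ideal I" and K: "ring_ideal K"
  shows "ring_ideal {i + k | i k. i \<in> I \<and> k \<in> K}"
  unfolding ring_ideal_def
proof (intro conjI ballI allI)
  show "0 \<in> {i + k | i k. i \<in> I \<and> k \<in> K}"
    using ideal_zero[OF I] ideal_zero[OF K] by force
next
  fix a b assume "a \<in> {i + k | i k. i \<in> I \<and> k \<in> K}" "b \<in> {i + k | i k. i \<in> I \<and> k \<in> K}"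
  then obtain i1 k1 i2 k2 where "a = i1 + k1" "b = i2 + k2" "i1 \<in> I" "i2 \<in> I" "k1 \<in> K" "k2 \<in> K"
    by auto
  then have "a + b = (i1 + i2) + (k1 + k2)" "i1 + i2 \<in> I" "k1 + k2 \<in> K"
    by (auto simp: algebra_simps ideal_add[OF I] ideal_add[OF K])
  then show "a + b \<in> {i + k | i k. i \<in> I \<and> k \<in> K}" by blast
next
  fix r a assume "a \<in> {i + k | i k. i \<in> I \<and> k \<in> K}"
  then obtain i k where "a = i + k" "i \<in> I" "k \<in> K" by auto
  then have "r * a = r * i + r * k" "r * i \<in> I" "r * k \<in> K"
    by (auto simp: algebra_simps intro: ideal_mult_right[OF I] ideal_mult_right[OF K])
  then show "r * a \<in> {i + k | i k. i \<in> I \<and> k \<in> K}" by blast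
qed

lemma ring_ideal_Union_chain:
  assumes "C \<noteq> {}" "\<forall>I\<in>C. ring_ideal I" "\<forall>I\<in>C. \<forall>K\<in>C. I \<subseteq> K \<or> K \<subseteq> I"
  shows "ring_ideal (\<Union>C)"
  unfolding ring_ideal_def
proof (intro conjI ballI allI)
  show "0 \<in> \<Union>C" using assms(1,2) ideal_zero by blast
next
  fix a b assume "a \<in> \<Union>C" "b \<in> \<Union>C"
  then obtain I K where "I \<in> C" "K \<in> C" "a \<in> I" "b \<in> K" by auto
  with assms(2,3) show "a + b \<in> \<Union>C" by (metis UnionI ideal_add subsetD)
next
  fix r a assume "a \<in> \<Union>C"
  with assms(2) show "r * a \<in> \<Union>C" using ideal_mult_left by blast
qed

lemma prime_ideal_one_notin: "prime_ideal P \<Longrightarrow> 1 \<notin> P"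
  using ideal_eq_UNIV_if_one by (auto simp: prime_ideal_def)

lemma prime_ideal_power_notin: "prime_ideal P \<Longrightarrow> x \<notin> P \<Longrightarrow> x ^ k \<notin> P"
  by (induction k) (auto simp: prime_ideal_one_notin, auto simp: prime_ideal_def)

lemma prime_ideal_nilpotent_mem: "prime_ideal P \<Longrightarrow> nilpotent_elt x \<Longrightarrow> x \<in> P"
  unfolding nilpotent_elt_def by (metis prime_ideal_power_notin ideal_zero prime_ideal_def)

lemma prime_ideal_one_minus_notin: "prime_ideal P \<Longrightarrow> g \<in> P \<Longrightarrow> 1 - g \<notin> P"
  by (metis diff_add_cancel ideal_add prime_ideal_one_notin prime_ideal_def)

lemma prime_ideal_Inter_chain:
  assumes "C \<noteq> {}" "\<forall>P\<in>C. prime_ideal P" "\<forall>P\<in>C. \<forall>P'\<in>C. P \<subseteq> P' \<or> P' \<subseteq> P"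
  shows "prime_ideal (\<Inter>C)"
  unfolding prime_ideal_def
proof (intro conjI allI impI)
  show "ring_ideal (\<Inter>C)" unfolding ring_ideal_def
    using assms(2) by (auto simp: prime_ideal_def intro: ideal_zero ideal_add ideal_mult_left)
  show "\<Inter>C \<noteq> UNIV" using assms(1,2) prime_ideal_one_notin by blast
next
  fix x y assume xy: "x * y \<in> \<Inter>C"
  show "x \<in> \<Inter>C \<or> y \<in> \<Inter>C"
  proof (rule ccontr)
    assume "\<not> (x \<in> \<Inter>C \<or> y \<in> \<Inter>C)"
    then obtain P P' where P: "P \<in> C" "x \<notin> P" and P': "P' \<in> C" "y \<notin> P'" by blast
    from assms(3) P(1) P'(1) have "P \<subseteq> P' \<or> P' \<subseteq> P" by blast
    then show False
      using xy P P' assms(2) unfolding prime_ideal_def by (metis Inter_iff subsetD)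
  qed
qed

section \<open>Maximal and minimal primes via Zorn's lemma\<close>

lemma exists_maximal_ideal_disjoint:
  fixes J S :: "'a::comm_ring_1 set"
  assumes "ring_ideal J" "J \<inter> S = {}"
  shows "\<exists>Q. ring_ideal Q \<and> J \<subseteq> Q \<and> Q \<inter> S = {} \<and>
    (\<forall>Q'. ring_ideal Q' \<and> Q \<subseteq> Q' \<and> Q' \<inter> S = {} \<longrightarrow> Q' = Q)"
proof -
  let ?A = "{Q. ring_ideal Q \<and> J \<subseteq> Q \<and> Q \<inter> S = {}}"
  have "\<exists>Q\<in>?A. \<forall>Q'\<in>?A. Q \<subseteq> Q' \<longrightarrow> Q' = Q"
  proof (rule subset_Zorn_nonempty)
    show "?A \<noteq> {}" using assms by blast
  next
    fix C assume C: "C \<noteq> {}" "subset.chain ?A C"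
    then have sub: "C \<subseteq> ?A" and chain: "\<forall>I\<in>C. \<forall>K\<in>C. I \<subseteq> K \<or> K \<subseteq> I"
      by (auto simp: subset_chain_def)
    have "ring_ideal (\<Union>C)" using sub chain by (intro ring_ideal_Union_chain[OF C(1)]) auto
    moreover have "J \<subseteq> \<Union>C" "\<Union>C \<inter> S = {}" using C(1) sub by auto
    ultimately show "\<Union>C \<in> ?A" by blast
  qed
  then obtain Q where "Q \<in> ?A" "\<forall>Q'\<in>?A. Q \<subseteq> Q' \<longrightarrow> Q' = Q" by blast
  then show ?thesis by (intro exI[of _ Q]) auto
qed

lemma prime_if_maximal_disjoint:
  fixes Q S :: "'a::comm_ring_1 set"
  assumes Q: "ring_ideal Q" "Q \<inter> S = {}"
    and maximal: "\<And>Q'. ring_ideal Q' \<Longrightarrow> Q \<subseteq> Q' \<Longrightarrow> Q' \<inter> S = {} \<Longrightarrow> Q' = Q"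
    and S: "1 \<in> S" "\<And>a b. a \<in> S \<Longrightarrow> b \<in> S \<Longrightarrow> a * b \<in> S"
  shows "prime_ideal Q"
proof -
  have meets: "\<exists>q\<in>Q. \<exists>r. q + r * x \<in> S" if "x \<notin> Q" for x
  proof -
    let ?Qx = "{q + c | q c. q \<in> Q \<and> c \<in> principal x}"
    have "ring_ideal ?Qx" by (intro ring_ideal_sum Q(1) ring_ideal_principal)
    moreover have "Q \<subseteq> ?Qx" using ideal_zero[OF ring_ideal_principal] by force
    moreover have "x \<in> ?Qx" using ideal_zero[OF Q(1)] self_mem_principal by force
    ultimately have "?Qx \<inter> S \<noteq> {}" using maximal that by blast
    then show ?thesis by (auto simp: principal_def)
  qed
  have "x \<in> Q \<or> y \<in> Q" if xy: "x * y \<in> Q" for x y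
  proof (rule ccontr)
    assume "\<not> (x \<in> Q \<or> y \<in> Q)"
    then obtain q1 r1 q2 r2 where
      q: "q1 \<in> Q" "q2 \<in> Q" and s: "q1 + r1 * x \<in> S" "q2 + r2 * y \<in> S"
      using meets by meson
    have "(q1 + r1 * x) * (q2 + r2 * y) = q1 * (q2 + r2 * y) + q2 * (r1 * x) + (r1 * r2) * (x * y)"
      by (simp add: algebra_simps)
    also have "\<dots> \<in> Q" using q xy Q(1) by (metis ideal_add ideal_mult_left ideal_mult_right)
    finally show False using S(2)[OF s] Q(2) by blast
  qed
  moreover have "Q \<noteq> UNIV" using Q(2) S(1) by blast
  ultimately show ?thesis using Q(1) by (simp add: prime_ideal_def)
qed

lemma maximal_ideal_imp_prime:
  assumes "maximal_ideal M"
  shows "prime_ideal M"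
proof (rule prime_if_maximal_disjoint[where S = "{1}"])
  show "ring_ideal M" "M \<inter> {1} = {}"
    using assms ideal_eq_UNIV_if_one by (auto simp: maximal_ideal_def)
  show "Q' = M" if "ring_ideal Q'" "M \<subseteq> Q'" "Q' \<inter> {1} = {}" for Q'
    using assms that by (auto simp: maximal_ideal_def)
qed auto

lemma exists_maximal_ideal_superset:
  assumes "ring_ideal J" "1 \<notin> J"
  shows "\<exists>M. maximal_ideal M \<and> J \<subseteq> M"
proof -
  from assms obtain M where M: "ring_ideal M" "J \<subseteq> M" "1 \<notin> M"
    and max: "\<forall>Q'. ring_ideal Q' \<and> M \<subseteq> Q' \<and> 1 \<notin> Q' \<longrightarrow> Q' = M"
    using exists_maximal_ideal_disjoint[of J "{1}"] by auto
  have "maximal_ideal M"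
    unfolding maximal_ideal_def using M max ideal_eq_UNIV_if_one by blast
  with M(2) show ?thesis by blast
qed

lemma exists_prime_disjoint:
  fixes S :: "'a::comm_ring_1 set"
  assumes "1 \<in> S" "0 \<notin> S" "\<And>a b. a \<in> S \<Longrightarrow> b \<in> S \<Longrightarrow> a * b \<in> S"
  shows "\<exists>Q. prime_ideal Q \<and> Q \<inter> S = {}"
proof -
  have "ring_ideal {0::'a}" by (simp add: ring_ideal_def)
  moreover have "{0} \<inter> S = {}" using assms(2) by blast
  ultimately obtain Q where Q: "ring_ideal Q" "Q \<inter> S = {}"
    and max: "\<forall>Q'. ring_ideal Q' \<and> Q \<subseteq> Q' \<and> Q' \<inter> S = {} \<longrightarrow> Q' = Q"
    using exists_maximal_ideal_disjoint[of "{0}" S] by auto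
  have "prime_ideal Q"
  proof (rule prime_if_maximal_disjoint[OF Q _ assms(1,3)])
    show "Q' = Q" if "ring_ideal Q'" "Q \<subseteq> Q'" "Q' \<inter> S = {}" for Q'
      using max that by blast
  qed
  with Q(2) show ?thesis by blast
qed

text \<open>Zorn's lemma is applied to the complements, as a chain of primes is bounded below by its
  intersection.\<close>

lemma exists_minimal_prime_subset:
  fixes Q :: "'a::comm_ring_1 set"
  assumes "prime_ideal Q"
  shows "\<exists>P. minimal_prime P \<and> P \<subseteq> Q"
proof -
  let ?A = "uminus ` {P. prime_ideal P \<and> P \<subseteq> Q}"
  have "\<exists>U\<in>?A. \<forall>U'\<in>?A. U \<subseteq> U' \<longrightarrow> U' = U"
  proof (rule subset_Zorn_nonempty)
    show "?A \<noteq> {}" using assms by blast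
  next
    fix C assume C: "C \<noteq> {}" "subset.chain ?A C"
    then have sub: "uminus ` C \<subseteq> {P. prime_ideal P \<and> P \<subseteq> Q}"
      and chain: "\<forall>P\<in>uminus ` C. \<forall>P'\<in>uminus ` C. P \<subseteq> P' \<or> P' \<subseteq> P"
      by (auto simp: subset_chain_def)
    have "prime_ideal (\<Inter>(uminus ` C))"
      using C(1) sub chain by (intro prime_ideal_Inter_chain) auto
    moreover have "\<Inter>(uminus ` C) \<subseteq> Q" using C(1) sub by blast
    moreover have "\<Union>C = - \<Inter>(uminus ` C)" by auto
    ultimately show "\<Union>C \<in> ?A" by blast
  qed
  then obtain P where P: "prime_ideal P" "P \<subseteq> Q"
    and min: "\<forall>U'\<in>?A. - P \<subseteq> U' \<longrightarrow> U' = - P"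
    by blast
  have "P' = P" if "prime_ideal P'" "P' \<subseteq> P" for P'
  proof -
    have "- P' \<in> ?A" using that P(2) by blast
    with min that(2) have "- P' = - P" by blast
    then show ?thesis by simp
  qed
  then have "minimal_prime P" using P(1) by (auto simp: minimal_prime_def)
  with P(2) show ?thesis by blast
qed

section \<open>Vanishing at a prime\<close>

text \<open>x vanishes in the localization of R at the complement of M.\<close>

definition vanishes_at :: "'a::comm_ring_1 set \<Rightarrow> 'a \<Rightarrow> bool" where
  "vanishes_at M x \<longleftrightarrow> (\<exists>s. s \<notin> M \<and> s * x = 0)"

lemma one_mem_if_not_subset_maximal:
  assumes "ring_ideal J" "\<And>M. maximal_ideal M \<Longrightarrow> \<not> J \<subseteq> M"
  shows "1 \<in> J"
  using exists_maximal_ideal_superset[OF assms(1)] assms(2) by blast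

lemma eq_zero_if_vanishes_at_maximal:
  assumes "\<And>M. maximal_ideal M \<Longrightarrow> vanishes_at M z"
  shows "z = 0"
proof -
  have "1 \<in> Ann z"
  proof (rule one_mem_if_not_subset_maximal[OF ring_ideal_Ann])
    fix M :: "'a set" assume "maximal_ideal M"
    then obtain s where "s \<notin> M" "s * z = 0" using assms by (auto simp: vanishes_at_def)
    then show "\<not> Ann z \<subseteq> M" by (auto simp: Ann_def)
  qed
  then show ?thesis by (simp add: Ann_def)
qed

lemma mem_prime_if_vanishes_at:
  assumes "prime_ideal P" "P \<subseteq> M" "vanishes_at M y"
  shows "y \<in> P"
proof -
  obtain s where "s \<notin> P" "s * y = 0" using assms(2,3) by (auto simp: vanishes_at_def)
  moreover have "0 \<in> P" using assms(1) ideal_zero by (auto simp: prime_ideal_def)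
  ultimately show ?thesis using assms(1) unfolding prime_ideal_def by metis
qed

text \<open>The multiplicative set generated by x and the complement of P meets 0, for otherwise
  a prime avoiding it would lie strictly below P.\<close>

lemma minimal_prime_vanishes_at_power:
  assumes "minimal_prime P" "x \<in> P"
  shows "\<exists>k. vanishes_at P (x ^ k)"
proof (rule ccontr)
  assume no_power: "\<not> ?thesis"
  have P: "prime_ideal P" using assms(1) by (simp add: minimal_prime_def)
  define S where "S = {s * x ^ k | s k. s \<notin> P}"
  have S_mem: "s * x ^ k \<in> S" if "s \<notin> P" for s k using that unfolding S_def by blast
  have "1 \<in> S" using S_mem[of 1 0] prime_ideal_one_notin[OF P] by simp
  moreover have "0 \<notin> S" using no_power by (auto simp: S_def vanishes_at_def)
  moreover have "a * b \<in> S" if ab: "a \<in> S" "b \<in> S" for a b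
  proof -
    obtain s1 k1 s2 k2 where "a = s1 * x ^ k1" "b = s2 * x ^ k2" "s1 \<notin> P" "s2 \<notin> P"
      using ab unfolding S_def by blast
    then have "a * b = (s1 * s2) * x ^ (k1 + k2)" "s1 * s2 \<notin> P"
      using P by (auto simp: algebra_simps power_add prime_ideal_def)
    then show ?thesis using S_mem by simp
  qed
  ultimately obtain Q where Q: "prime_ideal Q" "Q \<inter> S = {}"
    using exists_prime_disjoint by metis
  have "Q \<subseteq> P" using Q(2) S_mem[of _ 0] by auto
  then have "Q = P" using assms(1) Q(1) by (simp add: minimal_prime_def)
  moreover have "x \<in> S" using S_mem[of 1 1] prime_ideal_one_notin[OF P] by simp
  ultimately show False using Q(2) assms(2) by blast
qed

lemma quasi_pf_Ann_power_vanishes_at: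
  fixes f x :: "'a::comm_ring_1"
  assumes "quasi_pf_ring TYPE('a)" "prime_ideal M" "\<forall>k. \<not> vanishes_at M (f ^ k)"
    and "x \<in> Ann (f ^ n)"
  shows "vanishes_at M x"
proof -
  have "f ^ n \<in> Ann x" using assms(4) by (simp add: Ann_def mult.commute)
  with assms(1) obtain g where g: "g * x = 0" "nilpotent_elt (f ^ n * (1 - g))"
    unfolding quasi_pf_ring_def quasi_pure_def Ann_def by blast
  show ?thesis
  proof (cases "g \<in> M")
    case False
    with g(1) show ?thesis by (auto simp: vanishes_at_def)
  next
    case True
    obtain N where "(f ^ n * (1 - g)) ^ N = 0" using g(2) by (auto simp: nilpotent_elt_def)
    moreover have "(1 - g) ^ N * f ^ (n * N) = (f ^ n * (1 - g)) ^ N"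
      by (simp add: power_mult power_mult_distrib mult.commute[of "(1 - g) ^ N"])
    ultimately have "(1 - g) ^ N * f ^ (n * N) = 0" by simp
    moreover have "(1 - g) ^ N \<notin> M"
      using prime_ideal_power_notin[OF assms(2) prime_ideal_one_minus_notin[OF assms(2) True]] .
    ultimately show ?thesis using assms(3) by (auto simp: vanishes_at_def)
  qed
qed

section \<open>Pure annihilators\<close>

definition pure_ideal :: "'a::comm_ring_1 set \<Rightarrow> bool" where
  "pure_ideal I \<longleftrightarrow> (\<forall>b\<in>I. \<exists>v\<in>I. b * v = b)"

lemma pure_ideal_common_unit:
  assumes "ring_ideal I" "pure_ideal I" "finite B" "B \<subseteq> I"
  shows "\<exists>u\<in>I. \<forall>b\<in>B. b * u = b"
  using assms(3,4)
proof (induction B rule: finite_induct)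
  case empty
  show ?case using ideal_zero[OF assms(1)] by blast
next
  case (insert b B)
  then obtain u where u: "u \<in> I" "\<forall>c\<in>B. c * u = c" by auto
  have "b * (1 - u) \<in> I" using insert.prems assms(1) by (simp add: ideal_mult_right)
  with assms(2) obtain v where v: "v \<in> I" "b * (1 - u) * v = b * (1 - u)"
    by (auto simp: pure_ideal_def)
  define w where "w = u + v * (1 - u)"
  have "w \<in> I" using u(1) v(1) assms(1) by (simp add: w_def ideal_add ideal_mult_right)
  moreover have "c * w = c" if "c \<in> insert b B" for c
  proof (cases "c = b")
    case True
    then show ?thesis using v(2) by (simp add: w_def algebra_simps)
  next
    case False
    with that u(2) have "c * u = c" by simp
    moreover have "c * w = c * u + v * (c - c * u)" by (simp add: w_def algebra_simps)
    ultimately show ?thesis by simp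
  qed
  ultimately show ?case by blast
qed

lemma pure_Ann_if_local:
  assumes "T \<subseteq> Ann a"
    and local: "\<And>M x. maximal_ideal M \<Longrightarrow> T \<subseteq> M \<Longrightarrow> x \<in> Ann a \<Longrightarrow> vanishes_at M x"
  shows "pure_ideal (Ann a)"
  unfolding pure_ideal_def
proof
  fix b assume b: "b \<in> Ann a"
  let ?J = "{i + c | i c. i \<in> Ann a \<and> c \<in> Ann b}"
  have "1 \<in> ?J"
  proof (rule one_mem_if_not_subset_maximal)
    show "ring_ideal ?J" by (intro ring_ideal_sum ring_ideal_Ann)
  next
    fix M :: "'a set" assume M: "maximal_ideal M"
    show "\<not> ?J \<subseteq> M"
    proof (cases "T \<subseteq> M")
      case True
      then obtain s where s: "s \<notin> M" "s * b = 0"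
        using local[OF M True b] by (auto simp: vanishes_at_def)
      moreover have "s = 0 + s" "(0::'a) \<in> Ann a" "s \<in> Ann b" using s(2) by (simp_all add: Ann_def)
      then have "s \<in> ?J" by blast
      ultimately show ?thesis by blast
    next
      case False
      then obtain t where t: "t \<in> T" "t \<notin> M" by blast
      moreover have "t = t + 0" "t \<in> Ann a" "(0::'a) \<in> Ann b" using t(1) assms(1) by (auto simp: Ann_def)
      then have "t \<in> ?J" by blast
      ultimately show ?thesis by blast
    qed
  qed
  then obtain i c where "1 = i + c" "i \<in> Ann a" "c * b = 0" by (auto simp: Ann_def)
  moreover from this have "b * i = b" by (metis add.right_neutral distrib_left mult.commute mult.right_neutral)
  ultimately show "\<exists>v\<in>Ann a. b * v = b" by blast
qed

text \<open>Such an e is idempotent, since 1 - e \<in> Ann a, and Ann a = R (1 - e).\<close>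

definition ann_idempotent_generated :: "'a::comm_ring_1 \<Rightarrow> bool" where
  "ann_idempotent_generated a \<longleftrightarrow> (\<exists>e. e * a = a \<and> Ann a \<subseteq> Ann e)"

lemma ann_idempotent_generated_if_local:
  assumes "finite T" "T \<subseteq> Ann a"
    and local: "\<And>M x. maximal_ideal M \<Longrightarrow> T \<subseteq> M \<Longrightarrow> x \<in> Ann a \<Longrightarrow> vanishes_at M x"
  shows "ann_idempotent_generated a"
proof -
  obtain u where u: "u \<in> Ann a" "\<forall>t\<in>T. t * u = t"
    using pure_ideal_common_unit[OF ring_ideal_Ann pure_Ann_if_local[OF assms(2) local] assms(1,2)]
    by blast
  have "x * (1 - u) = 0" if x: "x \<in> Ann a" for x
  proof (rule eq_zero_if_vanishes_at_maximal)
    fix M :: "'a set" assume M: "maximal_ideal M"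
    show "vanishes_at M (x * (1 - u))"
    proof (cases "T \<subseteq> M")
      case True
      then obtain s where "s \<notin> M" "s * x = 0"
        using local[OF M True x] by (auto simp: vanishes_at_def)
      then have "s \<notin> M" "s * (x * (1 - u)) = 0" by (simp_all add: mult.assoc[symmetric])
      then show ?thesis by (auto simp: vanishes_at_def)
    next
      case False
      then obtain t where t: "t \<in> T" "t \<notin> M" by blast
      have "t * (x * (1 - u)) = x * (t - t * u)" by (simp add: algebra_simps)
      with t u(2) show ?thesis by (auto simp: vanishes_at_def)
    qed
  qed
  moreover have "(1 - u) * a = a" using u(1) by (simp add: Ann_def algebra_simps)
  ultimately show ?thesis by (auto simp: ann_idempotent_generated_def Ann_def)
qed

section \<open>Projective and flat principal ideals\<close>

definition principal_coeff :: "'a::comm_ring_1 \<Rightarrow> 'a \<Rightarrow> 'a" where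
  "principal_coeff a m = (SOME r. m = r * a)"

lemma principal_coeff: "m \<in> principal a \<Longrightarrow> m = principal_coeff a m * a"
  unfolding principal_coeff_def principal_def by (rule someI_ex) blast

lemma free_module_linear_expansion:
  fixes p :: "('a \<Rightarrow> 'b::comm_ring_1) \<Rightarrow> 'b"
  assumes add: "\<forall>\<phi>\<in>free_module X. \<forall>\<psi>\<in>free_module X. p (\<lambda>x. \<phi> x + \<psi> x) = p \<phi> + p \<psi>"
    and scale: "\<forall>r. \<forall>\<phi>\<in>free_module X. p (\<lambda>x. r * \<phi> x) = r * p \<phi>"
    and "finite G" "G \<subseteq> X" "{x. \<psi> x \<noteq> 0} \<subseteq> G"
  shows "p \<psi> = (\<Sum>x\<in>G. \<psi> x * p (\<lambda>y. if y = x then 1 else 0))"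
  using assms(3-5)
proof (induction G arbitrary: \<psi> rule: finite_induct)
  case empty
  have "(\<lambda>_. 0) \<in> free_module X" by (simp add: free_module_def)
  then have "p (\<lambda>_. 0) = 0" using scale[rule_format, where r = 0 and \<phi> = "\<lambda>_. 0"] by simp
  moreover have "\<psi> = (\<lambda>_. 0)" using empty.prems by auto
  ultimately show ?case by simp
next
  case (insert y G)
  let ?\<delta> = "\<lambda>x. if x = y then 1 else 0 :: 'b"
  define \<psi>' where "\<psi>' = \<psi>(y := 0)"
  have supp': "{x. \<psi>' x \<noteq> 0} \<subseteq> G" using insert.prems(2) by (auto simp: \<psi>'_def)
  have free_\<psi>': "\<psi>' \<in> free_module X"
    using supp' insert.hyps(1) insert.prems(1) by (auto simp: free_module_def finite_subset)
  have free_\<delta>: "?\<delta> \<in> free_module X" "(\<lambda>x. \<psi> y * ?\<delta> x) \<in> free_module X"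
    using insert.prems(1) by (auto simp: free_module_def finite_subset[of _ "{y}"])
  have "\<psi> = (\<lambda>x. \<psi>' x + \<psi> y * ?\<delta> x)" by (auto simp: \<psi>'_def)
  then have "p \<psi> = p \<psi>' + \<psi> y * p ?\<delta>"
    using add free_\<psi>' free_\<delta> scale by metis
  also have "p \<psi>' = (\<Sum>x\<in>G. \<psi>' x * p (\<lambda>z. if z = x then 1 else 0))"
    using insert.IH[OF _ supp'] insert.prems(1) by auto
  also have "\<dots> = (\<Sum>x\<in>G. \<psi> x * p (\<lambda>z. if z = x then 1 else 0))"
    using insert.hyps(2) by (auto simp: \<psi>'_def intro!: sum.cong)
  finally show ?case using insert.hyps by (simp add: add.commute)
qed

lemma projective_principal_if_ann_idempotent_generated:
  fixes a :: "'a::comm_ring_1"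
  assumes "ann_idempotent_generated a"
  shows "projective_submodule (principal a)"
proof -
  obtain e where ea: "e * a = a" and ann: "Ann a \<subseteq> Ann e"
    using assms by (auto simp: ann_idempotent_generated_def)
  have well_defined: "r * e = r' * e" if "r * a = r' * a" for r r'
  proof -
    have "(r - r') * a = 0" using that by (simp add: algebra_simps)
    then have "(r - r') * e = 0" using ann by (auto simp: Ann_def)
    then show ?thesis by (simp add: algebra_simps)
  qed
  text \<open>R a is a retract of R = R^({0}) via r \<mapsto> r a and r a \<mapsto> r e.\<close>
  define i where "i m = (\<lambda>x::'a. if x = 0 then principal_coeff a m * e else 0)" for m
  define p where "p \<phi> = \<phi> 0 * a" for \<phi> :: "'a \<Rightarrow> 'a"
  have "(\<forall>m\<in>principal a. i m \<in> free_module {0}) \<and>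
        (\<forall>m\<in>principal a. \<forall>m'\<in>principal a. i (m + m') = (\<lambda>x. i m x + i m' x)) \<and>
        (\<forall>r. \<forall>m\<in>principal a. i (r * m) = (\<lambda>x. r * i m x)) \<and>
        (\<forall>\<phi>\<in>free_module {0}. p \<phi> \<in> principal a) \<and>
        (\<forall>\<phi>\<in>free_module {0}. \<forall>\<psi>\<in>free_module {0}. p (\<lambda>x. \<phi> x + \<psi> x) = p \<phi> + p \<psi>) \<and>
        (\<forall>r. \<forall>\<phi>\<in>free_module {0}. p (\<lambda>x. r * \<phi> x) = r * p \<phi>) \<and>
        (\<forall>m\<in>principal a. p (i m) = m)"
  proof (intro conjI ballI allI)
    fix m
    have "{x. i m x \<noteq> 0} \<subseteq> {0}" by (auto simp: i_def)
    then show "i m \<in> free_module {0}" by (auto simp: free_module_def finite_subset)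
  next
    fix m m' assume m: "m \<in> principal a" "m' \<in> principal a"
    then have "m + m' \<in> principal a" using ideal_add[OF ring_ideal_principal] by blast
    then have "principal_coeff a (m + m') * a = (principal_coeff a m + principal_coeff a m') * a"
      using principal_coeff m by (metis distrib_right)
    then have "principal_coeff a (m + m') * e = principal_coeff a m * e + principal_coeff a m' * e"
      using well_defined by (metis distrib_right)
    then show "i (m + m') = (\<lambda>x. i m x + i m' x)" by (auto simp: i_def)
  next
    fix r m assume m: "m \<in> principal a"
    then have "r * m \<in> principal a" using ideal_mult_left[OF ring_ideal_principal] by blast
    then have "principal_coeff a (r * m) * a = (r * principal_coeff a m) * a"
      using principal_coeff m by (metis mult.assoc)
    then have "principal_coeff a (r * m) * e = r * (principal_coeff a m * e)"
      using well_defined by (metis mult.assoc)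
    then show "i (r * m) = (\<lambda>x. r * i m x)" by (auto simp: i_def)
  next
    fix m assume "m \<in> principal a"
    then have "m = principal_coeff a m * (e * a)" using principal_coeff ea by metis
    then show "p (i m) = m" by (simp add: p_def i_def mult.assoc)
  qed (simp_all add: p_def principal_memI distrib_right mult.assoc)
  then show ?thesis unfolding projective_submodule_def by blast
qed

lemma ann_idempotent_generated_if_projective_principal:
  fixes a :: "'a::comm_ring_1"
  assumes "projective_submodule (principal a)"
  shows "ann_idempotent_generated a"
proof -
  obtain X :: "'a set" and i :: "'a \<Rightarrow> 'a \<Rightarrow> 'a" and p where
    i_free: "\<forall>m\<in>principal a. i m \<in> free_module X" and
    i_scale: "\<forall>r. \<forall>m\<in>principal a. i (r * m) = (\<lambda>x. r * i m x)" and
    p_range: "\<forall>\<phi>\<in>free_module X. p \<phi> \<in> principal a" and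
    p_add: "\<forall>\<phi>\<in>free_module X. \<forall>\<psi>\<in>free_module X. p (\<lambda>x. \<phi> x + \<psi> x) = p \<phi> + p \<psi>" and
    p_scale: "\<forall>r. \<forall>\<phi>\<in>free_module X. p (\<lambda>x. r * \<phi> x) = r * p \<phi>" and
    retract: "\<forall>m\<in>principal a. p (i m) = m"
    using assms unfolding projective_submodule_def by blast
  let ?\<delta> = "\<lambda>x y. if y = x then 1 else 0 :: 'a"
  define \<phi> where "\<phi> = i a"
  define F where "F = {x. \<phi> x \<noteq> 0}"
  have "\<phi> \<in> free_module X" using i_free self_mem_principal by (auto simp: \<phi>_def)
  then have F: "finite F" "F \<subseteq> X" by (auto simp: F_def free_module_def)
  define s where "s x = principal_coeff a (p (?\<delta> x))" for x
  have ps: "p (?\<delta> x) = s x * a" if "x \<in> X" for x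
  proof -
    have "?\<delta> x \<in> free_module X" using that by (auto simp: free_module_def finite_subset[of _ "{x}"])
    then show ?thesis using p_range principal_coeff by (auto simp: s_def)
  qed
  text \<open>Expanding a = p (i a) along the basis vectors exhibits e.\<close>
  define e where "e = (\<Sum>x\<in>F. \<phi> x * s x)"
  have "a = p \<phi>" using retract self_mem_principal[of a] by (simp add: \<phi>_def)
  also have "\<dots> = (\<Sum>x\<in>F. \<phi> x * p (?\<delta> x))"
    using free_module_linear_expansion[OF p_add p_scale F] by (simp add: F_def)
  also have "\<dots> = e * a"
    using F(2) ps by (auto simp: e_def sum_distrib_right mult.assoc intro!: sum.cong)
  finally have "e * a = a" by simp
  moreover have "\<rho> * e = 0" if "\<rho> * a = 0" for \<rho>
  proof -
    have "(\<lambda>x. \<rho> * \<phi> x) = i (\<rho> * a)"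
      using i_scale[rule_format, OF self_mem_principal] by (simp add: \<phi>_def)
    also have "\<dots> = i (0 * a)" using that by simp
    also have "\<dots> = (\<lambda>x. 0)" using i_scale[rule_format, OF self_mem_principal, of 0] by simp
    finally have "\<rho> * \<phi> x = 0" for x by metis
    then show ?thesis by (simp add: e_def sum_distrib_left mult.assoc[symmetric])
  qed
  ultimately show ?thesis by (auto simp: ann_idempotent_generated_def Ann_def)
qed

lemma projective_principal_iff: "projective_submodule (principal a) \<longleftrightarrow> ann_idempotent_generated a"
  using projective_principal_if_ann_idempotent_generated
    ann_idempotent_generated_if_projective_principal by blast

lemma flat_principal_if_ann_idempotent_generated:
  fixes a :: "'a::comm_ring_1"
  assumes "ann_idempotent_generated a"
  shows "flat_submodule (principal a)"
  unfolding flat_submodule_def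
proof (intro allI impI)
  fix n :: nat and r m :: "nat \<Rightarrow> 'a"
  assume H: "(\<forall>i<n. m i \<in> principal a) \<and> (\<Sum>i<n. r i * m i) = 0"
  obtain e where ea: "e * a = a" and ann: "Ann a \<subseteq> Ann e"
    using assms by (auto simp: ann_idempotent_generated_def)
  define c where "c i = principal_coeff a (m i)" for i
  have mc: "m i = c i * a" if "i < n" for i using H that principal_coeff unfolding c_def by blast
  have "(\<Sum>i<n. r i * c i) * a = (\<Sum>i<n. r i * m i)"
    by (auto simp: sum_distrib_right mc mult.assoc intro!: sum.cong)
  then have "(\<Sum>i<n. r i * c i) * e = 0" using H ann by (auto simp: Ann_def)
  then have "(\<Sum>i<n. r i * (c i * e)) = 0" by (simp add: sum_distrib_right mult.assoc)
  moreover have "\<forall>i<n. m i = (\<Sum>j<(1::nat). (c i * e) * a)" using mc ea by (simp add: mult.assoc)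
  ultimately show "\<exists>(k::nat) (A::nat \<Rightarrow> nat \<Rightarrow> 'a) (y::nat \<Rightarrow> 'a). (\<forall>j<k. y j \<in> principal a) \<and>
      (\<forall>i<n. m i = (\<Sum>j<k. A i j * y j)) \<and> (\<forall>j<k. (\<Sum>i<n. r i * A i j) = 0)"
    by (intro exI[of _ 1] exI[of _ "\<lambda>i j. c i * e"] exI[of _ "\<lambda>j. a"])
      (simp add: self_mem_principal)
qed

lemma flat_principal_Ann:
  fixes a :: "'a::comm_ring_1"
  assumes "flat_submodule (principal a)" "f * a = 0"
  shows "\<exists>w. w * f = 0 \<and> w * a = a"
proof -
  have "(\<forall>i<(1::nat). a \<in> principal a) \<and> (\<Sum>i<(1::nat). f * a) = 0"
    using assms(2) by (simp add: self_mem_principal)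
  then have "\<exists>(k::nat) (A::nat \<Rightarrow> nat \<Rightarrow> 'a) (y::nat \<Rightarrow> 'a). (\<forall>j<k. y j \<in> principal a) \<and>
      (\<forall>i<(1::nat). a = (\<Sum>j<k. A i j * y j)) \<and> (\<forall>j<k. (\<Sum>i<(1::nat). f * A i j) = 0)"
    using assms(1) unfolding flat_submodule_def
    by (elim allE[of _ 1] allE[of _ "\<lambda>_. f"] allE[of _ "\<lambda>_. a"] impE)
  then show ?thesis
  proof (elim exE conjE)
    fix k :: nat and A :: "nat \<Rightarrow> nat \<Rightarrow> 'a" and y :: "nat \<Rightarrow> 'a"
    assume y: "\<forall>j<k. y j \<in> principal a" and "\<forall>i<(1::nat). a = (\<Sum>j<k. A i j * y j)"
      and "\<forall>j<k. (\<Sum>i<(1::nat). f * A i j) = 0"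
    then have a_eq: "a = (\<Sum>j<k. A 0 j * y j)" and rel: "\<forall>j<k. f * A 0 j = 0" by simp_all
    define t where "t j = principal_coeff a (y j)" for j
    define w where "w = (\<Sum>j<k. A 0 j * t j)"
    have yt: "y j = t j * a" if "j < k" for j using y that principal_coeff unfolding t_def by blast
    have "a = (\<Sum>j<k. A 0 j * y j)" by (rule a_eq)
    also have "\<dots> = w * a" using yt by (auto simp: w_def sum_distrib_right mult.assoc intro!: sum.cong)
    finally have "a = w * a" .
    moreover have "w * f = (\<Sum>j<k. t j * (f * A 0 j))"
      unfolding w_def sum_distrib_right by (simp add: mult_ac)
    then have "w * f = 0" using rel by (auto intro: sum.neutral)
    ultimately show ?thesis by auto
  qed
qed

lemma GPP_imp_GPF: "GPP_ring TYPE('a::comm_ring_1) \<Longrightarrow> GPF_ring TYPE('a)"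
  unfolding GPP_ring_def GPF_ring_def
  using projective_principal_iff flat_principal_if_ann_idempotent_generated by blast

lemma GPF_imp_quasi_pf:
  assumes "GPF_ring TYPE('a::comm_ring_1)"
  shows "quasi_pf_ring TYPE('a)"
  unfolding quasi_pf_ring_def quasi_pure_def
proof (intro allI ballI)
  fix f x :: 'a assume "x \<in> Ann f"
  obtain n where n: "n \<ge> 1" "flat_submodule (principal (x ^ n))"
    using assms by (auto simp: GPF_ring_def)
  then obtain n' where n': "n = Suc n'" by (cases n) auto
  have "f * x ^ n = (x * f) * x ^ n'" by (simp add: n' algebra_simps)
  then have "f * x ^ n = 0" using \<open>x \<in> Ann f\<close> by (simp add: Ann_def)
  then obtain w where w: "w * f = 0" "w * x ^ n = x ^ n" using flat_principal_Ann[OF n(2)] by blast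
  have "(x * (1 - w)) ^ n = (x ^ n * (1 - w)) * (1 - w) ^ n'"
    by (simp add: n' power_mult_distrib mult_ac)
  moreover have "x ^ n * (1 - w) = 0" using w(2) by (simp add: algebra_simps)
  ultimately have "nilpotent_elt (x * (1 - w))" by (auto simp: nilpotent_elt_def)
  with w(1) show "\<exists>g\<in>Ann f. nilpotent_elt (x * (1 - g))" by (auto simp: Ann_def)
qed

section \<open>Quasi p.f. rings are GPP\<close>

lemma common_annihilating_power:
  fixes f :: "'a::comm_ring_1"
  assumes "finite S" "\<forall>s\<in>S. \<exists>k. s * f ^ k = 0"
  shows "\<exists>n\<ge>1. \<forall>s\<in>S. s * f ^ n = 0"
  using assms
proof (induction S rule: finite_induct)
  case empty
  show ?case by auto
next
  case (insert s S)
  then obtain n k where n: "n \<ge> 1" "\<forall>t\<in>S. t * f ^ n = 0" and k: "s * f ^ k = 0" by auto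
  have "t * f ^ (n + k) = 0" if "t \<in> insert s S" for t
  proof (cases "t = s")
    case True
    have "t * f ^ (n + k) = (t * f ^ k) * f ^ n" by (simp add: power_add mult_ac)
    with True k show ?thesis by simp
  next
    case False
    with that n(2) have "t * f ^ n = 0" by simp
    moreover have "t * f ^ (n + k) = (t * f ^ n) * f ^ k" by (simp add: power_add mult_ac)
    ultimately show ?thesis by simp
  qed
  with n(1) show ?case by (intro exI[of _ "n + k"]) auto
qed

lemma projective_power_if_local_witnesses:
  fixes f :: "'a::comm_ring_1"
  assumes "quasi_pf_ring TYPE('a)" "finite T" "T \<subseteq> Ann (f ^ n)"
    and "\<And>M k. maximal_ideal M \<Longrightarrow> vanishes_at M (f ^ k) \<Longrightarrow> \<not> T \<subseteq> M"
  shows "projective_submodule (principal (f ^ n))"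
  unfolding projective_principal_iff
proof (rule ann_idempotent_generated_if_local[OF assms(2,3)])
  fix M x assume "maximal_ideal M" "T \<subseteq> M" "x \<in> Ann (f ^ n)"
  with assms(1,4) show "vanishes_at M x"
    using quasi_pf_Ann_power_vanishes_at maximal_ideal_imp_prime by blast
qed

lemma quasi_pf_imp_GPP_if_finite_maximal:
  assumes "finite {M :: 'a::comm_ring_1 set. maximal_ideal M}" "quasi_pf_ring TYPE('a)"
  shows "GPP_ring TYPE('a)"
  unfolding GPP_ring_def
proof
  fix f :: 'a
  let ?N = "{M. maximal_ideal M \<and> (\<exists>k. vanishes_at M (f ^ k))}"
  have "\<forall>M\<in>?N. \<exists>s. s \<notin> M \<and> (\<exists>k. s * f ^ k = 0)" by (auto simp: vanishes_at_def)
  then obtain s where s: "\<forall>M\<in>?N. s M \<notin> M \<and> (\<exists>k. s M * f ^ k = 0)" by metis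
  have "finite (s ` ?N)" using assms(1) by (auto intro: finite_subset)
  then obtain n where n: "n \<ge> 1" "\<forall>t\<in>s ` ?N. t * f ^ n = 0"
    using common_annihilating_power[of "s ` ?N" f] s by auto
  have "projective_submodule (principal (f ^ n))"
  proof (rule projective_power_if_local_witnesses[OF assms(2) \<open>finite (s ` ?N)\<close>])
    show "s ` ?N \<subseteq> Ann (f ^ n)" using n(2) by (auto simp: Ann_def)
    show "\<not> s ` ?N \<subseteq> M" if "maximal_ideal M" "vanishes_at M (f ^ k)" for M k
      using that s by blast
  qed
  with n(1) show "\<exists>n\<ge>1. projective_submodule (principal (f ^ n))" by blast
qed

text \<open>D(f) together with the sets D(s), s f^k = 0, cover Min(R).\<close>

lemma Min_quasi_compact_annihilator_cover:
  fixes f :: "'a::comm_ring_1"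
  assumes "Min_quasi_compact TYPE('a)"
  shows "\<exists>C. finite C \<and> (\<forall>s\<in>C. \<exists>k. s * f ^ k = 0) \<and>
    (\<forall>P. minimal_prime P \<longrightarrow> f \<in> P \<longrightarrow> (\<exists>s\<in>C. s \<notin> P))"
proof -
  let ?Z = "{s. \<exists>k. s * f ^ k = 0}"
  let ?S = "insert {f} ((\<lambda>s. {s}) ` ?Z)"
  have "\<forall>P. minimal_prime P \<longrightarrow> (\<exists>S\<in>?S. \<not> S \<subseteq> P)"
  proof (intro allI impI)
    fix P :: "'a set" assume P: "minimal_prime P"
    show "\<exists>S\<in>?S. \<not> S \<subseteq> P"
    proof (cases "f \<in> P")
      case True
      obtain k where "vanishes_at P (f ^ k)"
        using minimal_prime_vanishes_at_power[OF P True] by blast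
      then obtain s where s: "s \<notin> P" "s * f ^ k = 0" by (auto simp: vanishes_at_def)
      then have "{s} \<in> ?S" by blast
      with s(1) show ?thesis by blast
    qed auto
  qed
  then have "\<exists>F\<subseteq>?S. finite F \<and> (\<forall>P. minimal_prime P \<longrightarrow> (\<exists>S\<in>F. \<not> S \<subseteq> P))"
    using assms unfolding Min_quasi_compact_def by blast
  then obtain F where F: "F \<subseteq> ?S" "finite F" "\<forall>P. minimal_prime P \<longrightarrow> (\<exists>S\<in>F. \<not> S \<subseteq> P)"
    by auto
  have "finite (F - {{f}})" "F - {{f}} \<subseteq> (\<lambda>s. {s}) ` ?Z" using F(1,2) by auto
  then obtain C where C: "C \<subseteq> ?Z" "finite C" "F - {{f}} = (\<lambda>s. {s}) ` C"
    using finite_subset_image[of "F - {{f}}" "\<lambda>s. {s}" ?Z] by blast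
  have "\<exists>s\<in>C. s \<notin> P" if P: "minimal_prime P" "f \<in> P" for P
  proof -
    obtain S where S: "S \<in> F" "\<not> S \<subseteq> P" using F(3) P(1) by blast
    with P(2) have "S \<in> F - {{f}}" by blast
    then have "S \<in> (\<lambda>s. {s}) ` C" by (simp only: C(3))
    then obtain s where "s \<in> C" "S = {s}" by blast
    with S(2) show ?thesis by blast
  qed
  with C(1,2) show ?thesis by blast
qed

lemma quasi_pf_imp_GPP_if_Min_quasi_compact:
  assumes "Min_quasi_compact TYPE('a::comm_ring_1)" "quasi_pf_ring TYPE('a)"
  shows "GPP_ring TYPE('a)"
  unfolding GPP_ring_def
proof
  fix f :: 'a
  obtain C where C: "finite C" "\<forall>s\<in>C. \<exists>k. s * f ^ k = 0"
    and cover: "\<forall>P. minimal_prime P \<longrightarrow> f \<in> P \<longrightarrow> (\<exists>s\<in>C. s \<notin> P)"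
    using Min_quasi_compact_annihilator_cover[OF assms(1), of f] by blast
  obtain n where n: "n \<ge> 1" "\<forall>s\<in>C. s * f ^ n = 0"
    using common_annihilating_power[OF C] by blast
  have "quasi_pure (Ann (f ^ n))" using assms(2) by (simp add: quasi_pf_ring_def)
  moreover have "C \<subseteq> Ann (f ^ n)" using n(2) by (auto simp: Ann_def)
  ultimately have "\<forall>s\<in>C. \<exists>g\<in>Ann (f ^ n). nilpotent_elt (s * (1 - g))"
    unfolding quasi_pure_def by blast
  then obtain g where g: "\<forall>s\<in>C. g s \<in> Ann (f ^ n) \<and> nilpotent_elt (s * (1 - g s))"
    by metis
  have "projective_submodule (principal (f ^ n))"
  proof (rule projective_power_if_local_witnesses[OF assms(2)])
    show "finite (g ` C)" "g ` C \<subseteq> Ann (f ^ n)" using C(1) g by auto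
  next
    fix M k assume M: "maximal_ideal M" and "vanishes_at M (f ^ k)"
    have M_prime: "prime_ideal M" using M by (rule maximal_ideal_imp_prime)
    then obtain P where P: "minimal_prime P" "P \<subseteq> M" using exists_minimal_prime_subset by blast
    then have P_prime: "prime_ideal P" by (simp add: minimal_prime_def)
    then have "f ^ k \<in> P" using P(2) \<open>vanishes_at M (f ^ k)\<close> by (rule mem_prime_if_vanishes_at)
    then have "f \<in> P" using P_prime prime_ideal_power_notin by blast
    then obtain s where s: "s \<in> C" "s \<notin> P" using cover P(1) by blast
    have "g s \<notin> M"
    proof
      assume "g s \<in> M"
      then have "1 - g s \<notin> P" using prime_ideal_one_minus_notin[OF M_prime] P(2) by blast
      moreover have "s * (1 - g s) \<in> P" using prime_ideal_nilpotent_mem[OF P_prime] g s(1) by blast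
      ultimately show False using s(2) P_prime by (auto simp: prime_ideal_def)
    qed
    with s(1) show "\<not> g ` C \<subseteq> M" by blast
  qed
  with n(1) show "\<exists>n\<ge>1. projective_submodule (principal (f ^ n))" by blast
qed

theorem corollary5p5:
  assumes "finite {M :: 'a::comm_ring_1 set. maximal_ideal M} \<or> Min_quasi_compact TYPE('a)"
  shows "(GPP_ring TYPE('a) \<longleftrightarrow> GPF_ring TYPE('a)) \<and>
         (GPF_ring TYPE('a) \<longleftrightarrow> quasi_pf_ring TYPE('a))"
proof -
  have "quasi_pf_ring TYPE('a) \<Longrightarrow> GPP_ring TYPE('a)"
    using assms quasi_pf_imp_GPP_if_finite_maximal quasi_pf_imp_GPP_if_Min_quasi_compact by blast
  then show ?thesis using GPP_imp_GPF GPF_imp_quasi_pf by blast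
qed

end
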